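(* Let $\beta>1$ and $M\ge1$, and let $$g(\mathbf{p})=\log2-\frac{\beta|\mathbf{p}|^2}{2}+\big\langle\log\cosh(\beta\,\mathbf{s}\cdot\mathbf{p})\big\rangle_{\mathbf{s}},\qquad \mathbf{p}\in\mathbb{R}^M.$$ Then the global maximum of $g$ (equivalently the minimum of the free energy $-g/\beta$) is attained exactly at the two symmetric points $\mathbf{p}=\pm m_0(\beta)\mathbf{1}$.
   Context: $m_0(\beta)$ is the largest nonnegative solution of $m=\tanh(\beta m)$ (positive for $\beta>1$). $\langle\cdot\rangle_{\mathbf{s}}$ is expectation over $\mathbf{s}\in\{-1,1\}^M$ with i.i.d. entries of mean $m_0(\beta)$. *)

theory Defs
  imports "HOL-Analysis.Analysis"
begin

definition m0 :: "real \<Rightarrow> real" where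
  "m0 \<beta> = Sup {m. 0 \<le> m \<and> m = tanh (\<beta> * m)}"

text \<open>Spin configurations s in {-1,1}^M, with M = CARD('n).\<close>
definition spins :: "(real ^ 'n::finite) set" where
  "spins = {s. \<forall>i. s $ i = 1 \<or> s $ i = -1}"

text \<open>Probability of s under i.i.d. entries with mean m: each entry is 1 w.p. (1+m)/2.\<close>
definition spin_weight :: "real \<Rightarrow> real ^ 'n::finite \<Rightarrow> real" where
  "spin_weight m s = (\<Prod>i\<in>UNIV. (1 + m * s $ i) / 2)"

definition spin_avg :: "real \<Rightarrow> (real ^ 'n::finite \<Rightarrow> real) \<Rightarrow> real" where
  "spin_avg \<beta> f = (\<Sum>s\<in>spins. spin_weight (m0 \<beta>) s * f s)"

definition gfun :: "real \<Rightarrow> real ^ 'n::finite \<Rightarrow> real" where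
  "gfun \<beta> p = ln 2 - \<beta> * (norm p)\<^sup>2 / 2
      + spin_avg \<beta> (\<lambda>s. ln (cosh (\<beta> * (s \<bullet> p))))"

end

theory Submission
  imports Defs
begin

text \<open>
  Write a = beta p, b = beta m0 (1,...,1), Z(a) = prod_i 2 cosh a_i and w_a(s) = cosh (s.a) / Z(a),
  a probability law on spin configurations. Because m0 = tanh (beta m0), the i.i.d. spin law is
  exp (s.b) / Z(b), and on even functions of s it can be replaced by w_b. Splitting
  ln cosh (s.a) = ln w_a(s) + ln Z(a) gives
    g(p) = ln 2 + sum_s w_b(s) ln w_a(s) + sum_i (ln 2 + phi(p_i)),  phi(x) = ln cosh (beta x) - beta x^2/2.
  Gibbs' inequality bounds the cross entropy by its value at a = b, with equality only if w_a = w_b,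
  and phi' = beta (tanh (beta x) - x) shows that phi is maximal exactly at +-m0. So a maximiser has
  |p_i| = m0 for all i, and w_a(1,...,1) = w_b(1,...,1) then forces |sum_i p_i| = M m0: all signs agree.
\<close>

lemma tanh_div_strict_antimono:
  fixes y z :: real
  assumes "0 < y" "y < z"
  shows "tanh z / z < tanh y / y"
proof -
  have "(\<lambda>t. tanh t / t) z < (\<lambda>t. tanh t / t) y"
  proof (rule DERIV_neg_imp_decreasing_open[OF assms(2)])
    fix x :: real
    assume "y < x" "x < z"
    then have x: "x > 0" using assms by simp
    have "x \<le> sinh x"
      using real_le_x_sinh[of x] x by (simp add: sinh_def exp_minus)
    also have "sinh x < sinh x * cosh x"
      using x cosh_real_ge_1[of x] cosh_real_one_iff[of x] by (simp add: order_le_less)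
    finally have "x - sinh x * cosh x < 0" by simp
    moreover have "1 - tanh x ^ 2 = 1 / cosh x ^ 2"
      using add_pos_nonneg[OF zero_less_one zero_le_power2[of "sinh x"]] cosh_square_eq[of x]
      by (simp add: tanh_def power_divide field_simps)
    then have "(1 - tanh x ^ 2) * x - tanh x = (x - sinh x * cosh x) / cosh x ^ 2"
      by (simp add: tanh_def diff_divide_distrib power2_eq_square)
    ultimately have "((1 - tanh x ^ 2) * x - tanh x) / x\<^sup>2 < 0"
      using x by (simp add: divide_neg_pos)
    moreover have "((\<lambda>t. tanh t / t) has_real_derivative ((1 - tanh x ^ 2) * x - tanh x) / x\<^sup>2) (at x)"
      using x by (auto intro!: derivative_eq_intros simp: power2_eq_square)
    ultimately show "\<exists>d. ((\<lambda>t. tanh t / t) has_real_derivative d) (at x) \<and> d < 0"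
      by blast
  qed (use assms in \<open>auto intro!: continuous_intros\<close>)
  then show ?thesis by simp
qed

lemma tanh_div_tendsto_1: "((\<lambda>y. tanh y / y) \<longlongrightarrow> 1) (at (0::real))"
proof -
  have "(tanh has_field_derivative 1) (at (0::real))"
    using has_field_derivative_tanh[OF _ DERIV_ident, of 0] by simp
  then show ?thesis by (simp add: has_field_derivative_iff)
qed

lemma tanh_fixed_point_exists:
  fixes \<beta> :: real
  assumes "\<beta> > 1"
  shows "\<exists>r>0. tanh (\<beta> * r) = r"
proof -
  have "\<forall>\<^sub>F y in at 0. 1 / \<beta> < tanh y / y"
    using order_tendstoD(1)[OF tanh_div_tendsto_1, of "1 / \<beta>"] assms by simp
  then obtain d where d: "d > 0" "\<And>y. y \<noteq> 0 \<Longrightarrow> dist y 0 < d \<Longrightarrow> 1 / \<beta> < tanh y / y"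
    unfolding eventually_at by auto
  define y where "y = d / 2"
  have y: "y > 0" "1 / \<beta> < tanh y / y"
    using d(1) d(2)[of y] by (auto simp: y_def)
  define e where "e = y / \<beta>"
  have e: "0 < e" "e < tanh (\<beta> * e)"
    using y assms by (simp_all add: e_def field_simps)
  then have "e < 1" using tanh_real_lt_1[of "\<beta> * e"] by linarith
  then have "\<exists>r. e \<le> r \<and> r \<le> 1 \<and> tanh (\<beta> * r) - r = 0"
    using e tanh_real_lt_1[of \<beta>] by (intro IVT2') (auto intro!: continuous_intros)
  then obtain r where "e \<le> r" "tanh (\<beta> * r) = r" by auto
  then show ?thesis using e(1) by (intro exI[of _ r]) auto
qed

lemma tanh_fixed_point_sign:
  fixes \<beta> r x :: real
  assumes "\<beta> > 0" "r > 0" "tanh (\<beta> * r) = r"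
  shows "0 < x \<Longrightarrow> x < r \<Longrightarrow> x < tanh (\<beta> * x)"
    and "r < x \<Longrightarrow> tanh (\<beta> * x) < x"
proof -
  have slope: "tanh (\<beta> * r) / (\<beta> * r) = 1 / \<beta>"
    using assms by simp
  show "x < tanh (\<beta> * x)" if "0 < x" "x < r"
    using tanh_div_strict_antimono[of "\<beta> * x" "\<beta> * r"] that assms
    unfolding slope by (simp add: field_simps)
  show "tanh (\<beta> * x) < x" if "r < x"
    using tanh_div_strict_antimono[of "\<beta> * r" "\<beta> * x"] that assms
    unfolding slope by (simp add: field_simps)
qed

lemma m0_eq_positive_fixed_point:
  fixes \<beta> r :: real
  assumes "\<beta> > 0" "r > 0" "tanh (\<beta> * r) = r"
  shows "m0 \<beta> = r"
proof -
  have "{m. 0 \<le> m \<and> m = tanh (\<beta> * m)} = {0, r}"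
  proof safe
    fix m assume "0 \<le> m" "m = tanh (\<beta> * m)" "m \<noteq> 0"
    then show "m = r"
      using tanh_fixed_point_sign[OF assms, of m] by (cases m r rule: linorder_cases) auto
  qed (use assms in auto)
  then show ?thesis
    unfolding m0_def using assms(2) by (simp add: cSup_eq_Max)
qed

lemma m0_pos_fixed_point:
  fixes \<beta> :: real
  assumes "\<beta> > 1"
  shows "0 < m0 \<beta>" "tanh (\<beta> * m0 \<beta>) = m0 \<beta>"
  using tanh_fixed_point_exists[OF assms] m0_eq_positive_fixed_point[of \<beta>] assms by auto

definition mf_potential :: "real \<Rightarrow> real \<Rightarrow> real" where
  "mf_potential \<beta> x = ln (cosh (\<beta> * x)) - \<beta> * x\<^sup>2 / 2"

lemma mf_potential_has_real_derivative:
  "(mf_potential \<beta> has_real_derivative \<beta> * (tanh (\<beta> * x) - x)) (at x)"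
  unfolding mf_potential_def
  by (auto intro!: derivative_eq_intros simp: tanh_def field_simps power2_eq_square)

lemma continuous_on_mf_potential: "continuous_on A (mf_potential \<beta>)"
  unfolding mf_potential_def by (intro continuous_intros) (auto simp: cosh_real_pos)

lemma mf_potential_abs: "\<beta> \<ge> 0 \<Longrightarrow> mf_potential \<beta> \<bar>x\<bar> = mf_potential \<beta> x"
  unfolding mf_potential_def by (metis abs_mult abs_of_nonneg cosh_real_abs power2_abs)

lemma mf_potential_less_at_m0:
  fixes \<beta> x :: real
  assumes "\<beta> > 1" "\<bar>x\<bar> \<noteq> m0 \<beta>"
  shows "mf_potential \<beta> x < mf_potential \<beta> (m0 \<beta>)"
proof -
  note sign = tanh_fixed_point_sign[of \<beta> "m0 \<beta>", OF _ m0_pos_fixed_point[OF assms(1)]]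
  have "mf_potential \<beta> \<bar>x\<bar> < mf_potential \<beta> (m0 \<beta>)"
  proof (cases "\<bar>x\<bar> < m0 \<beta>")
    case True
    show ?thesis
    proof (rule DERIV_pos_imp_increasing_open[OF True _ continuous_on_mf_potential])
      fix t assume "\<bar>x\<bar> < t" "t < m0 \<beta>"
      then have "\<beta> * (tanh (\<beta> * t) - t) > 0" using sign(1)[of t] assms(1) by simp
      then show "\<exists>d. (mf_potential \<beta> has_real_derivative d) (at t) \<and> d > 0"
        using mf_potential_has_real_derivative by blast
    qed
  next
    case False
    then have "m0 \<beta> < \<bar>x\<bar>" using assms(2) by linarith
    then show ?thesis
    proof (rule DERIV_neg_imp_decreasing_open[OF _ _ continuous_on_mf_potential])
      fix t assume "m0 \<beta> < t" "t < \<bar>x\<bar>"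
      then have "\<beta> * (tanh (\<beta> * t) - t) < 0" using sign(2)[of t] assms(1) by (simp add: mult_pos_neg)
      then show "\<exists>d. (mf_potential \<beta> has_real_derivative d) (at t) \<and> d < 0"
        using mf_potential_has_real_derivative by blast
    qed
  qed
  then show ?thesis using mf_potential_abs[of \<beta> x] assms(1) by simp
qed

lemma mf_potential_le_at_m0:
  fixes \<beta> x :: real
  assumes "\<beta> > 1"
  shows "mf_potential \<beta> x \<le> mf_potential \<beta> (m0 \<beta>)"
  using mf_potential_less_at_m0[OF assms, of x] mf_potential_abs[of \<beta> x] assms
  by (cases "\<bar>x\<bar> = m0 \<beta>") (auto simp: m0_pos_fixed_point(1) order.strict_implies_order)

lemma cross_entropy_gap:
  fixes P Q :: "'a \<Rightarrow> real"
  assumes "\<And>x. x \<in> S \<Longrightarrow> P x > 0" "\<And>x. x \<in> S \<Longrightarrow> Q x > 0" "sum P S = 1" "sum Q S = 1"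
  shows "(\<Sum>x\<in>S. P x * ln (P x)) - (\<Sum>x\<in>S. P x * ln (Q x))
       = (\<Sum>x\<in>S. P x * (Q x / P x - 1 - ln (Q x / P x)))"
proof -
  have "(\<Sum>x\<in>S. P x * (Q x / P x - 1 - ln (Q x / P x)))
      = (\<Sum>x\<in>S. Q x - P x) + (\<Sum>x\<in>S. P x * ln (P x) - P x * ln (Q x))"
    unfolding sum.distrib[symmetric] using assms(1,2)
    by (intro sum.cong refl) (simp add: ln_div field_simps less_imp_neq[symmetric])
  then show ?thesis using assms(3,4) by (simp add: sum_subtractf)
qed

lemma gibbs_inequality:
  fixes P Q :: "'a \<Rightarrow> real"
  assumes "finite S" "\<And>x. x \<in> S \<Longrightarrow> P x > 0" "\<And>x. x \<in> S \<Longrightarrow> Q x > 0"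
    and "sum P S = 1" "sum Q S = 1"
  shows "(\<Sum>x\<in>S. P x * ln (Q x)) \<le> (\<Sum>x\<in>S. P x * ln (P x))"
    and "(\<Sum>x\<in>S. P x * ln (Q x)) = (\<Sum>x\<in>S. P x * ln (P x)) \<Longrightarrow> x \<in> S \<Longrightarrow> Q x = P x"
proof -
  define t where "t x = P x * (Q x / P x - 1 - ln (Q x / P x))" for x
  have t_nonneg: "t x \<ge> 0" if "x \<in> S" for x
    unfolding t_def using ln_le_minus_one[of "Q x / P x"] assms(2,3)[OF that] by simp
  have gap: "(\<Sum>x\<in>S. P x * ln (P x)) - (\<Sum>x\<in>S. P x * ln (Q x)) = sum t S"
    unfolding t_def by (rule cross_entropy_gap[OF assms(2-5)])
  show "(\<Sum>x\<in>S. P x * ln (Q x)) \<le> (\<Sum>x\<in>S. P x * ln (P x))"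
    using sum_nonneg[of S t] t_nonneg gap by simp
  assume "(\<Sum>x\<in>S. P x * ln (Q x)) = (\<Sum>x\<in>S. P x * ln (P x))" "x \<in> S"
  then have "t x = 0"
    using gap sum_nonneg_eq_0_iff[OF assms(1)] t_nonneg by auto
  then have "ln (Q x / P x) = Q x / P x - 1"
    unfolding t_def using assms(2)[OF \<open>x \<in> S\<close>] by simp
  then have "Q x / P x = 1"
    using assms(2,3)[OF \<open>x \<in> S\<close>] by (intro ln_eq_minus_one) simp_all
  then show "Q x = P x" using assms(2)[OF \<open>x \<in> S\<close>] by simp
qed

lemma spins_eq_image_PiE:
  "spins = vec_lambda ` (PiE UNIV (\<lambda>_. {1, -1}) :: ('n::finite \<Rightarrow> real) set)"
proof safe
  fix s :: "real ^ 'n" assume "s \<in> spins"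
  then show "s \<in> vec_lambda ` PiE UNIV (\<lambda>_. {1, -1})"
    by (intro image_eqI[of _ _ "vec_nth s"]) (auto simp: spins_def)
qed (auto simp: spins_def PiE_def)

lemma finite_spins: "finite (spins :: (real ^ 'n::finite) set)"
  unfolding spins_eq_image_PiE by (intro finite_imageI finite_PiE) auto

lemma uminus_in_spins: "s \<in> spins \<Longrightarrow> - s \<in> spins"
  by (auto simp: spins_def)

lemma sum_spins_prod:
  fixes f :: "'n::finite \<Rightarrow> real \<Rightarrow> real"
  shows "(\<Sum>s\<in>spins. \<Prod>i\<in>UNIV. f i (s $ i)) = (\<Prod>i\<in>UNIV. f i 1 + f i (-1))"
proof -
  have "inj_on vec_lambda (PiE UNIV (\<lambda>_. {1, -1}) :: ('n \<Rightarrow> real) set)"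
    by (auto simp: inj_on_def vec_eq_iff)
  then have "(\<Sum>s\<in>spins. \<Prod>i\<in>UNIV. f i (s $ i))
      = (\<Sum>g\<in>PiE UNIV (\<lambda>_. {1, -1}). \<Prod>i\<in>UNIV. f i (g i))"
    unfolding spins_eq_image_PiE by (simp add: sum.reindex)
  also have "\<dots> = (\<Prod>i\<in>UNIV. \<Sum>y\<in>{1, -1}. f i y)"
    by (rule prod_sum_PiE[symmetric]) auto
  finally show ?thesis by simp
qed

definition spin_partition :: "real ^ 'n::finite \<Rightarrow> real" where
  "spin_partition a = (\<Prod>i\<in>UNIV. 2 * cosh (a $ i))"

definition cosh_weight :: "real ^ 'n::finite \<Rightarrow> real ^ 'n \<Rightarrow> real" where
  "cosh_weight a s = cosh (s \<bullet> a) / spin_partition a"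

lemma spin_partition_pos: "spin_partition a > 0"
  unfolding spin_partition_def by (intro prod_pos) auto

lemma spin_partition_cong: "(\<And>i. \<bar>a $ i\<bar> = \<bar>b $ i\<bar>) \<Longrightarrow> spin_partition a = spin_partition b"
  unfolding spin_partition_def by (intro prod.cong) auto

lemma sum_spins_exp_inner: "(\<Sum>s\<in>spins. exp (s \<bullet> a)) = spin_partition a"
proof -
  have "(\<Sum>s\<in>spins. exp (s \<bullet> a)) = (\<Sum>s\<in>spins. \<Prod>i\<in>UNIV. exp (s $ i * a $ i))"
    by (simp add: inner_vec_def exp_sum)
  also have "\<dots> = (\<Prod>i\<in>UNIV. exp (a $ i) + exp (- a $ i))"
    by (subst sum_spins_prod) simp
  also have "\<dots> = spin_partition a"
    unfolding spin_partition_def cosh_def by (intro prod.cong) auto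
  finally show ?thesis .
qed

lemma sum_cosh_weight: "(\<Sum>s\<in>spins. cosh_weight a s) = 1"
proof -
  have "(\<Sum>s\<in>spins. cosh (s \<bullet> a)) = ((\<Sum>s\<in>spins. exp (s \<bullet> a)) + (\<Sum>s\<in>spins. exp (s \<bullet> - a))) / 2"
    unfolding cosh_def by (simp add: sum.distrib sum_divide_distrib[symmetric])
  also have "\<dots> = spin_partition a"
    unfolding sum_spins_exp_inner by (simp add: spin_partition_def)
  finally show ?thesis
    using spin_partition_pos[of a] by (simp add: cosh_weight_def sum_divide_distrib[symmetric])
qed

lemma cosh_weight_pos: "cosh_weight a s > 0"
  unfolding cosh_weight_def using spin_partition_pos[of a] by simp

lemma spin_factor_tanh_eq_exp:
  fixes h x :: real
  assumes "x = 1 \<or> x = -1"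
  shows "(1 + tanh h * x) / 2 = exp (x * h) / (2 * cosh h)"
  using assms
proof
  assume "x = 1"
  then show ?thesis
    using cosh_plus_sinh[of h] by (simp add: tanh_def field_simps)
next
  assume "x = -1"
  then have "(1 + tanh h * x) / 2 = (cosh h - sinh h) / (2 * cosh h)"
    by (simp add: tanh_def field_simps)
  then show ?thesis
    using \<open>x = -1\<close> by (simp add: cosh_minus_sinh)
qed

lemma spin_weight_tanh_eq_exp:
  fixes s :: "real ^ 'n::finite"
  assumes "s \<in> spins"
  shows "spin_weight (tanh h) s = exp (s \<bullet> (\<chi> i. h)) / spin_partition (\<chi> i. h :: real ^ 'n)"
proof -
  have "(1 + tanh h * s $ i) / 2 = exp (s $ i * h) / (2 * cosh h)" for i
    using assms unfolding spins_def by (auto simp: spin_factor_tanh_eq_exp)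
  then have "spin_weight (tanh h) s = (\<Prod>i\<in>UNIV. exp (s $ i * h)) / (\<Prod>i\<in>(UNIV::'n set). 2 * cosh h)"
    unfolding spin_weight_def by (simp add: prod_dividef)
  then show ?thesis
    by (simp add: inner_vec_def exp_sum spin_partition_def)
qed

lemma sum_spin_weight_even:
  fixes F :: "real ^ 'n::finite \<Rightarrow> real"
  assumes "\<And>s. F (- s) = F s"
  shows "(\<Sum>s\<in>spins. spin_weight (tanh h) s * F s) = (\<Sum>s\<in>spins. cosh_weight (\<chi> i. h) s * F s)"
proof -
  define b :: "real ^ 'n" where "b = (\<chi> i. h)"
  have "(\<Sum>s\<in>spins. spin_weight (tanh h) s * F s) = (\<Sum>s\<in>spins. exp (s \<bullet> b) / spin_partition b * F s)"
    unfolding b_def by (intro sum.cong refl) (simp add: spin_weight_tanh_eq_exp)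
  moreover have "\<dots> = (\<Sum>s\<in>spins. exp (- (s \<bullet> b)) / spin_partition b * F s)"
    by (rule sum.reindex_bij_witness[of _ uminus uminus]) (auto simp: uminus_in_spins assms)
  moreover have "(\<Sum>s\<in>spins. cosh_weight b s * F s)
      = (\<Sum>s\<in>spins. (exp (s \<bullet> b) / spin_partition b * F s
                      + exp (- (s \<bullet> b)) / spin_partition b * F s) / 2)"
    using spin_partition_pos[of b] by (intro sum.cong refl) (simp add: cosh_weight_def cosh_def field_simps)
  moreover have "\<dots> = ((\<Sum>s\<in>spins. exp (s \<bullet> b) / spin_partition b * F s)
         + (\<Sum>s\<in>spins. exp (- (s \<bullet> b)) / spin_partition b * F s)) / 2"
    by (simp add: sum.distrib sum_divide_distrib[symmetric])
  ultimately show ?thesis unfolding b_def by simp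
qed

lemma cosh_weight_cross_entropy_le:
  fixes a b :: "real ^ 'n::finite"
  shows "(\<Sum>s\<in>spins. cosh_weight b s * ln (cosh_weight a s))
       \<le> (\<Sum>s\<in>spins. cosh_weight b s * ln (cosh_weight b s))"
  by (rule gibbs_inequality) (simp_all add: finite_spins cosh_weight_pos sum_cosh_weight)

lemma cosh_weight_eq_if_cross_entropy_eq:
  fixes a b :: "real ^ 'n::finite"
  assumes "(\<Sum>s\<in>spins. cosh_weight b s * ln (cosh_weight a s))
         = (\<Sum>s\<in>spins. cosh_weight b s * ln (cosh_weight b s))" "s \<in> spins"
  shows "cosh_weight a s = cosh_weight b s"
  using gibbs_inequality(2)[OF finite_spins cosh_weight_pos cosh_weight_pos sum_cosh_weight sum_cosh_weight]
    assms by blast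

definition magnetized_point :: "real \<Rightarrow> real ^ 'n::finite" where
  "magnetized_point \<beta> = m0 \<beta> *\<^sub>R (\<chi> i. 1)"

lemma spin_avg_even:
  fixes \<beta> :: real and F :: "real ^ 'n::finite \<Rightarrow> real"
  assumes "\<beta> > 1" "\<And>s. F (- s) = F s"
  shows "spin_avg \<beta> F = (\<Sum>s\<in>spins. cosh_weight (\<beta> *\<^sub>R magnetized_point \<beta>) s * F s)"
proof -
  have "spin_avg \<beta> F = (\<Sum>s\<in>spins. spin_weight (tanh (\<beta> * m0 \<beta>)) s * F s)"
    unfolding spin_avg_def using m0_pos_fixed_point(2)[OF assms(1)] by simp
  also have "\<dots> = (\<Sum>s\<in>spins. cosh_weight (\<chi> i. \<beta> * m0 \<beta>) s * F s)"
    using assms(2) by (rule sum_spin_weight_even)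
  also have "(\<chi> i. \<beta> * m0 \<beta>) = (\<beta> *\<^sub>R magnetized_point \<beta> :: real ^ 'n)"
    by (simp add: magnetized_point_def vec_eq_iff)
  finally show ?thesis .
qed

lemma gfun_eq_cross_entropy_plus_potential:
  fixes \<beta> :: real and p :: "real ^ 'n::finite"
  assumes "\<beta> > 1"
  shows "gfun \<beta> p = ln 2
      + (\<Sum>s\<in>spins. cosh_weight (\<beta> *\<^sub>R magnetized_point \<beta>) s * ln (cosh_weight (\<beta> *\<^sub>R p) s))
      + (\<Sum>i\<in>UNIV. ln 2 + mf_potential \<beta> (p $ i))"
proof -
  define a where "a = \<beta> *\<^sub>R p"
  define w where "w = cosh_weight (\<beta> *\<^sub>R magnetized_point \<beta> :: real ^ 'n)"
  have "spin_avg \<beta> (\<lambda>s. ln (cosh (\<beta> * (s \<bullet> p)))) = (\<Sum>s\<in>spins. w s * ln (cosh (s \<bullet> a)))"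
    unfolding w_def a_def by (subst spin_avg_even[OF assms]) simp_all
  also have "\<dots> = (\<Sum>s\<in>spins. w s * (ln (cosh_weight a s) + ln (spin_partition a)))"
    using spin_partition_pos[of a]
    by (intro sum.cong refl) (simp add: cosh_weight_def ln_div)
  also have "\<dots> = (\<Sum>s\<in>spins. w s * ln (cosh_weight a s)) + ln (spin_partition a)"
    unfolding w_def by (simp add: distrib_left sum.distrib sum_distrib_right[symmetric] sum_cosh_weight)
  also have "ln (spin_partition a) = (\<Sum>i\<in>UNIV. ln 2 + ln (cosh (\<beta> * p $ i)))"
    unfolding spin_partition_def a_def by (subst ln_prod) (auto simp: ln_mult)
  finally have avg: "spin_avg \<beta> (\<lambda>s. ln (cosh (\<beta> * (s \<bullet> p))))
      = (\<Sum>s\<in>spins. w s * ln (cosh_weight a s)) + (\<Sum>i\<in>UNIV. ln 2 + ln (cosh (\<beta> * p $ i)))" .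
  have "(norm p)\<^sup>2 = (\<Sum>i\<in>UNIV. (p $ i)\<^sup>2)"
    unfolding power2_norm_eq_inner by (simp add: inner_vec_def power2_eq_square)
  then show ?thesis
    unfolding gfun_def avg w_def a_def mf_potential_def
    by (simp add: sum_subtractf sum.distrib sum_distrib_left sum_divide_distrib algebra_simps)
qed

lemma gfun_uminus: "gfun \<beta> (- p) = gfun \<beta> p"
  unfolding gfun_def by simp

lemma vec_eq_const_or_neg_const:
  fixes p :: "real ^ 'n::finite"
  assumes abs_eq: "\<And>i. \<bar>p $ i\<bar> = c" and sum_eq: "\<bar>\<Sum>i\<in>UNIV. p $ i\<bar> = (\<Sum>i\<in>(UNIV::'n set). c)"
  shows "p = c *\<^sub>R (\<chi> i. 1) \<or> p = - (c *\<^sub>R (\<chi> i. 1))"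
proof -
  have bounds: "p $ i \<le> c" "- p $ i \<le> c" for i
    using abs_eq[of i] by linarith+
  show ?thesis
  proof (cases "(\<Sum>i\<in>UNIV. p $ i) \<ge> 0")
    case True
    then have "p $ i = c" for i
      using sum_eq bounds by (intro sum_mono_inv[of "\<lambda>i. p $ i"]) auto
    then show ?thesis by (simp add: vec_eq_iff)
  next
    case False
    then have "- p $ i = c" for i
      using sum_eq bounds by (intro sum_mono_inv[of "\<lambda>i. - p $ i"]) (auto simp: sum_negf)
    then show ?thesis by (simp add: vec_eq_iff minus_equation_iff)
  qed
qed

lemma gfun_le_magnetized_point:
  fixes \<beta> :: real and p :: "real ^ 'n::finite"
  assumes "\<beta> > 1"
  shows "gfun \<beta> p \<le> gfun \<beta> (magnetized_point \<beta> :: real ^ 'n)"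
proof -
  note cosh_weight_cross_entropy_le[of "\<beta> *\<^sub>R magnetized_point \<beta> :: real ^ 'n" "\<beta> *\<^sub>R p"]
  moreover have "(\<Sum>i\<in>UNIV. ln 2 + mf_potential \<beta> (p $ i))
      \<le> (\<Sum>i\<in>UNIV. ln 2 + mf_potential \<beta> ((magnetized_point \<beta> :: real ^ 'n) $ i))"
    by (rule sum_mono) (simp add: magnetized_point_def mf_potential_le_at_m0[OF assms])
  ultimately show ?thesis
    unfolding gfun_eq_cross_entropy_plus_potential[OF assms] by simp
qed

lemma gfun_eq_magnetized_point_imp_components:
  fixes \<beta> :: real and p :: "real ^ 'n::finite"
  assumes "\<beta> > 1" and eq: "gfun \<beta> p = gfun \<beta> (magnetized_point \<beta> :: real ^ 'n)"
  shows "\<bar>p $ i\<bar> = m0 \<beta>"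
    and "s \<in> spins \<Longrightarrow> cosh_weight (\<beta> *\<^sub>R p) s = cosh_weight (\<beta> *\<^sub>R magnetized_point \<beta>) s"
proof -
  let ?v = "magnetized_point \<beta> :: real ^ 'n"
  let ?w = "cosh_weight (\<beta> *\<^sub>R ?v)"
  note cross = cosh_weight_cross_entropy_le[of "\<beta> *\<^sub>R ?v" "\<beta> *\<^sub>R p"]
  have pot: "ln 2 + mf_potential \<beta> (p $ j) \<le> ln 2 + mf_potential \<beta> (?v $ j)" for j
    by (simp add: magnetized_point_def mf_potential_le_at_m0[OF assms(1)])
  have pot_le: "(\<Sum>j\<in>UNIV. ln 2 + mf_potential \<beta> (p $ j)) \<le> (\<Sum>j\<in>UNIV. ln 2 + mf_potential \<beta> (?v $ j))"
    by (rule sum_mono) (rule pot)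
  note decomposition = eq[unfolded gfun_eq_cross_entropy_plus_potential[OF assms(1)]]
  have pot_sum: "(\<Sum>j\<in>UNIV. ln 2 + mf_potential \<beta> (p $ j)) = (\<Sum>j\<in>UNIV. ln 2 + mf_potential \<beta> (?v $ j))"
    using decomposition cross pot_le by linarith
  show "\<bar>p $ i\<bar> = m0 \<beta>"
  proof (rule ccontr)
    assume "\<bar>p $ i\<bar> \<noteq> m0 \<beta>"
    then have "ln 2 + mf_potential \<beta> (p $ i) < ln 2 + mf_potential \<beta> (?v $ i)"
      using mf_potential_less_at_m0[OF assms(1)] by (simp add: magnetized_point_def)
    then show False
      using sum_mono_inv[OF pot_sum pot, of i] by simp
  qed
  have "(\<Sum>s\<in>spins. ?w s * ln (cosh_weight (\<beta> *\<^sub>R p) s)) = (\<Sum>s\<in>spins. ?w s * ln (?w s))"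
    using decomposition cross pot_le by linarith
  then show "cosh_weight (\<beta> *\<^sub>R p) s = ?w s" if "s \<in> spins"
    using that by (rule cosh_weight_eq_if_cross_entropy_eq)
qed

lemma gfun_eq_magnetized_point_imp:
  fixes \<beta> :: real and p :: "real ^ 'n::finite"
  assumes "\<beta> > 1" and eq: "gfun \<beta> p = gfun \<beta> (magnetized_point \<beta> :: real ^ 'n)"
  shows "p = magnetized_point \<beta> \<or> p = - magnetized_point \<beta>"
proof -
  let ?v = "magnetized_point \<beta> :: real ^ 'n"
  let ?one = "\<chi> i. 1 :: real ^ 'n"
  note abs_eq = gfun_eq_magnetized_point_imp_components(1)[OF assms]
  have m0: "0 < m0 \<beta>" using m0_pos_fixed_point[OF assms(1)] by simp
  have "spin_partition (\<beta> *\<^sub>R p) = spin_partition (\<beta> *\<^sub>R ?v)"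
    using abs_eq assms(1) m0 by (intro spin_partition_cong) (simp add: magnetized_point_def abs_mult)
  moreover have "cosh_weight (\<beta> *\<^sub>R p) ?one = cosh_weight (\<beta> *\<^sub>R ?v) ?one"
    by (rule gfun_eq_magnetized_point_imp_components(2)[OF assms]) (simp add: spins_def)
  ultimately have "cosh (?one \<bullet> (\<beta> *\<^sub>R p)) = cosh (?one \<bullet> (\<beta> *\<^sub>R ?v))"
    using spin_partition_pos[of "\<beta> *\<^sub>R p"] by (simp add: cosh_weight_def)
  then have "\<bar>\<beta> * (\<Sum>i\<in>UNIV. p $ i)\<bar> = \<beta> * (\<Sum>i\<in>(UNIV::'n set). m0 \<beta>)"
    using assms(1) m0 by (simp add: inner_vec_def magnetized_point_def sum_distrib_left)
  then have "\<bar>\<Sum>i\<in>UNIV. p $ i\<bar> = (\<Sum>i\<in>(UNIV::'n set). m0 \<beta>)"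
    using assms(1) by (simp add: abs_mult)
  then show ?thesis
    using vec_eq_const_or_neg_const[OF abs_eq] unfolding magnetized_point_def by blast
qed

theorem mainTheorem5:
  fixes \<beta> :: real
  assumes "\<beta> > 1"
  shows "{p :: real ^ 'n::finite. \<forall>q :: real ^ 'n. gfun \<beta> q \<le> gfun \<beta> p}
         = {m0 \<beta> *\<^sub>R (\<chi> i. 1), - (m0 \<beta> *\<^sub>R (\<chi> i. 1))}"
proof -
  let ?v = "magnetized_point \<beta> :: real ^ 'n"
  have le_v: "gfun \<beta> q \<le> gfun \<beta> ?v" for q :: "real ^ 'n"
    by (rule gfun_le_magnetized_point[OF assms])
  have "(\<forall>q :: real ^ 'n. gfun \<beta> q \<le> gfun \<beta> p) \<longleftrightarrow> p = ?v \<or> p = - ?v" for p :: "real ^ 'n"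
  proof
    assume "\<forall>q :: real ^ 'n. gfun \<beta> q \<le> gfun \<beta> p"
    then have "gfun \<beta> p = gfun \<beta> ?v" using le_v[of p] by (blast intro: order_antisym)
    then show "p = ?v \<or> p = - ?v" by (rule gfun_eq_magnetized_point_imp[OF assms])
  qed (use le_v in \<open>auto simp: gfun_uminus\<close>)
  then show ?thesis
    unfolding magnetized_point_def by blast
qed

end
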